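(* Let $n\ge3$ and $k\ge0$ be integers with $k<n\le 2k$. If $S\subseteq\mathrm{Inc}(A,B)$ is an independent set in $G_n^k$ that is not reversible, then \[|S|\le 2+\frac{(2k+2-n)(2k+1-n)}{2}.\]
   Context: For integers $n\ge3$, $k\ge0$, the crown $S_n^k$ is the poset with ground set $A\cup B$, $A=\{a_1,\dots,a_{n+k}\}$, $B=\{b_1,\dots,b_{n+k}\}$, indices cyclic modulo $n+k$; elements of $A$ are pairwise incomparable, as are elements of $B$, and $a_i$ is incomparable to $b_j$ when $j\in\{i,i+1,\dots,i+k\}$ (mod $n+k$), while $a_i<b_j$ otherwise. $\mathrm{Inc}(A,B)$ is the set of pairs $(a,b)\in A\times B$ with $a$ incomparable to $b$. The graph $G_n^k$ has vertex set $\mathrm{Inc}(A,B)$, with $(a,b)$ adjacent to $(x,y)$ iff $a<y$ and $x<b$ in $S_n^k$. A set $R\subseteq\mathrm{Inc}(A,B)$ is reversible if there is a linear extension $L$ of $S_n^k$ with $b<a$ in $L$ for all $(a,b)\in R$. *)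

theory Defs
  imports Complex_Main
begin

text \<open>Elements of the crown S_n^k: CA i stands for a_i, CB j for b_j, indices in {0..<n+k}
  (the paper's cyclic indices 1..n+k, shifted to 0..n+k-1).\<close>
datatype cel = CA nat | CB nat

definition crown_ground :: "nat \<Rightarrow> nat \<Rightarrow> cel set" where
  "crown_ground n k = {CA i | i. i < n + k} \<union> {CB j | j. j < n + k}"

definition crown_less :: "nat \<Rightarrow> nat \<Rightarrow> cel \<Rightarrow> cel \<Rightarrow> bool" where
  "crown_less n k x y \<longleftrightarrow> (\<exists>i j. x = CA i \<and> y = CB j \<and> i < n + k \<and> j < n + k \<and>
      \<not> (\<exists>t \<le> k. j = (i + t) mod (n + k)))"

definition crown_Inc :: "nat \<Rightarrow> nat \<Rightarrow> (cel \<times> cel) set" where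
  "crown_Inc n k = {(CA i, CB j) | i j. i < n + k \<and> j < n + k \<and> \<not> crown_less n k (CA i) (CB j)}"

definition crown_adj :: "nat \<Rightarrow> nat \<Rightarrow> cel \<times> cel \<Rightarrow> cel \<times> cel \<Rightarrow> bool" where
  "crown_adj n k p q \<longleftrightarrow> crown_less n k (fst p) (snd q) \<and> crown_less n k (fst q) (snd p)"

definition crown_independent :: "nat \<Rightarrow> nat \<Rightarrow> (cel \<times> cel) set \<Rightarrow> bool" where
  "crown_independent n k S \<longleftrightarrow> S \<subseteq> crown_Inc n k \<and>
      (\<forall>p\<in>S. \<forall>q\<in>S. \<not> crown_adj n k p q)"

definition crown_linext :: "nat \<Rightarrow> nat \<Rightarrow> cel rel \<Rightarrow> bool" where
  "crown_linext n k L \<longleftrightarrow> linear_order_on (crown_ground n k) L \<and>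
      (\<forall>x y. crown_less n k x y \<longrightarrow> (x, y) \<in> L)"

definition crown_reversible :: "nat \<Rightarrow> nat \<Rightarrow> (cel \<times> cel) set \<Rightarrow> bool" where
  "crown_reversible n k R \<longleftrightarrow> R \<subseteq> crown_Inc n k \<and>
      (\<exists>L. crown_linext n k L \<and> (\<forall>(a, b)\<in>R. (b, a) \<in> L))"

end

theory Submission
  imports Defs
begin

text \<open>Put m = n + k, so that k < n means m > 2k, and let J be the set of indices j with b_j in
  a pair of S. The elements b_z incomparable to every partner a_i of b_j (every i with
  (a_i, b_j) in S) form an arc around j, of length k + 2 minus the number of partners at most;
  independence of S says that of two such arcs one contains the centre of the other.
  If j' lies outside the arc of j, every linear extension reversing S must put b_j below b_j'.
  When S is not reversible these forced relations contain a cycle, and a shortest one is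
  chordless. A Helly-type property of short arcs rules out chordless cycles of length other
  than three. The three arcs of a triangle cover the whole cycle, and every other arc of the
  family contains the n - k - 1 points that are farther than k from one of the triangle's
  centres, none of which lies in J. Counting the total arc length from above and from below
  gives a quadratic inequality in |J| whose worst case is the bound.\<close>

section \<open>Cyclic distance and short arcs on the cycle of length m\<close>

definition cdist :: "nat \<Rightarrow> nat \<Rightarrow> nat \<Rightarrow> nat" where
  "cdist m a b = (if a \<le> b then b - a else m + b - a)"

lemma cdist_int:
  "a < m \<Longrightarrow> int (cdist m a b) = (if a \<le> b then int b - int a else int m + int b - int a)"
  by (simp add: cdist_def of_nat_diff)

lemma cdist_self [simp]: "cdist m a a = 0"
  by (simp add: cdist_def)

lemma cdist_less: "a < m \<Longrightarrow> b < m \<Longrightarrow> cdist m a b < m"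
  by (auto simp: cdist_def)

lemma cdist_le: "a \<le> b \<Longrightarrow> cdist m a b = b - a"
  by (simp add: cdist_def)

lemma cdist_gt: "b < a \<Longrightarrow> cdist m a b = m + b - a"
  by (simp add: cdist_def)

lemma cdist_rotate: "a < m \<Longrightarrow> b < m \<Longrightarrow> p < m \<Longrightarrow> cdist m a b = cdist m (cdist m p a) (cdist m p b)"
  unfolding cdist_def by (cases "p \<le> a"; cases "p \<le> b"; cases "a \<le> b"; simp)

lemma cdist_add_cdist:
  "a < m \<Longrightarrow> b < m \<Longrightarrow> c < m \<Longrightarrow>
   cdist m a c = (if cdist m a b + cdist m b c < m then cdist m a b + cdist m b c
                  else cdist m a b + cdist m b c - m)"
  unfolding cdist_def by (cases "a \<le> b"; cases "b \<le> c"; cases "a \<le> c"; simp)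

lemma cdist_swap: "a < m \<Longrightarrow> b < m \<Longrightarrow> a \<noteq> b \<Longrightarrow> cdist m a b + cdist m b a = m"
  by (auto simp: cdist_def)

lemma add_cdist_mod: "a < m \<Longrightarrow> b < m \<Longrightarrow> (a + cdist m a b) mod m = b"
proof (cases "a \<le> b")
  case False
  moreover assume "a < m" "b < m"
  ultimately have "a + cdist m a b = b + m" by (simp add: cdist_def)
  with \<open>b < m\<close> show ?thesis by simp
qed (simp add: cdist_def)

lemma cdist_add_mod: "a < m \<Longrightarrow> t < m \<Longrightarrow> cdist m a ((a + t) mod m) = t"
proof (cases "a + t < m")
  case False
  moreover assume "a < m" "t < m"
  ultimately have "(a + t) mod m = a + t - m"
    using le_mod_geq[of m "a + t"] by simp
  with False \<open>a < m\<close> \<open>t < m\<close> show ?thesis by (simp add: cdist_def)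
qed (simp add: cdist_def)

lemma cdist_inject_right: "a < m \<Longrightarrow> b < m \<Longrightarrow> c < m \<Longrightarrow> cdist m c a = cdist m c b \<Longrightarrow> a = b"
  by (metis add_cdist_mod)

lemma cdist_inject_left: "a < m \<Longrightarrow> b < m \<Longrightarrow> c < m \<Longrightarrow> cdist m a c = cdist m b c \<Longrightarrow> a = b"
  unfolding cdist_def by (cases "a \<le> c"; cases "b \<le> c"; simp)

lemma ex_mod_le_iff_cdist_le:
  "a < m \<Longrightarrow> b < m \<Longrightarrow> k < m \<Longrightarrow> (\<exists>t\<le>k. b = (a + t) mod m) \<longleftrightarrow> cdist m a b \<le> k"
  by (metis add_cdist_mod cdist_add_mod le_less_trans)

definition reflect :: "nat \<Rightarrow> nat \<Rightarrow> nat" where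
  "reflect m z = (if z = 0 then 0 else m - z)"

lemma reflect_less: "z < m \<Longrightarrow> reflect m z < m"
  by (auto simp: reflect_def)

lemma reflect_reflect: "z < m \<Longrightarrow> reflect m (reflect m z) = z"
  by (auto simp: reflect_def)

lemma cdist_reflect: "a < m \<Longrightarrow> b < m \<Longrightarrow> cdist m (reflect m a) (reflect m b) = cdist m b a"
  unfolding cdist_def reflect_def by (cases "a = 0"; cases "b = 0"; cases "a \<le> b"; simp)

definition in_arc :: "nat \<Rightarrow> nat \<Rightarrow> nat \<Rightarrow> nat \<Rightarrow> nat \<Rightarrow> bool" where
  "in_arc m x y p z \<longleftrightarrow> cdist m z p \<le> x \<or> cdist m p z \<le> y"

definition arc :: "nat \<Rightarrow> nat \<Rightarrow> nat \<Rightarrow> nat \<Rightarrow> nat set" where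
  "arc m x y p = {z. z < m \<and> in_arc m x y p z}"

lemma in_arc_self [simp]: "in_arc m x y p p"
  by (simp add: in_arc_def)

lemma in_arc_int:
  "p < m \<Longrightarrow> z < m \<Longrightarrow> in_arc m x y p z \<longleftrightarrow>
   ((if z \<le> p then int p - int z else int m + int p - int z) \<le> int x \<or>
    (if p \<le> z then int z - int p else int m + int z - int p) \<le> int y)"
  unfolding in_arc_def by (simp only: zle_int[symmetric] cdist_int)

lemma in_arc_rotate:
  "p < m \<Longrightarrow> z < m \<Longrightarrow> c < m \<Longrightarrow> in_arc m x y p z \<longleftrightarrow> in_arc m x y (cdist m c p) (cdist m c z)"
  unfolding in_arc_def using cdist_rotate[of z m p c] cdist_rotate[of p m z c] by simp

lemma in_arc_reflect:
  "p < m \<Longrightarrow> z < m \<Longrightarrow> in_arc m x y p z \<longleftrightarrow> in_arc m y x (reflect m p) (reflect m z)"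
  unfolding in_arc_def using cdist_reflect[of p m z] cdist_reflect[of z m p] by auto

lemma in_arc_close: "in_arc m x y p q \<Longrightarrow> x + y \<le> k \<Longrightarrow> cdist m q p \<le> k \<or> cdist m p q \<le> k"
  unfolding in_arc_def by auto

lemma arc_rotate:
  assumes "c < m" "p < m"
  shows "cdist m c ` arc m x y p = arc m x y (cdist m c p)"
proof
  show "cdist m c ` arc m x y p \<subseteq> arc m x y (cdist m c p)"
  proof
    fix w assume "w \<in> cdist m c ` arc m x y p"
    then obtain z where "z < m" "in_arc m x y p z" "w = cdist m c z"
      unfolding arc_def by blast
    with assms show "w \<in> arc m x y (cdist m c p)"
      unfolding arc_def by (simp add: cdist_less flip: in_arc_rotate)
  qed
  show "arc m x y (cdist m c p) \<subseteq> cdist m c ` arc m x y p"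
  proof
    fix w assume w: "w \<in> arc m x y (cdist m c p)"
    define z where "z = (c + w) mod m"
    have z: "z < m" "cdist m c z = w"
      using w assms cdist_add_mod unfolding z_def arc_def by auto
    with w assms have "z \<in> arc m x y p"
      unfolding arc_def by (simp add: in_arc_rotate[of p m z c])
    with z show "w \<in> cdist m c ` arc m x y p" by blast
  qed
qed

lemma card_arc_le:
  assumes "p < m"
  shows "card (arc m x y p) \<le> x + y + 1"
proof -
  let ?A = "{z. z < m \<and> cdist m z p \<le> x}" and ?B = "{z. z < m \<and> cdist m p z \<le> y}"
  have "card ?A \<le> card {..x}"
    by (rule card_inj_on_le[where f = "\<lambda>z. cdist m z p"])
      (auto simp: inj_on_def intro: cdist_inject_left[OF _ _ assms])
  moreover have "card ?B \<le> card {..y}"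
    by (rule card_inj_on_le[where f = "cdist m p"])
      (auto simp: inj_on_def intro: cdist_inject_right[OF _ _ assms])
  moreover have "p \<in> ?A \<inter> ?B" using assms by simp
  then have "0 < card (?A \<inter> ?B)" by (subst card_gt_0_iff) auto
  moreover have "card (?A \<union> ?B) + card (?A \<inter> ?B) = card ?A + card ?B"
    using card_Un_Int[of ?A ?B] by simp
  moreover have "arc m x y p = ?A \<union> ?B" unfolding arc_def in_arc_def by auto
  ultimately show ?thesis by simp
qed

text \<open>Arcs of length at most k + 1 on a cycle of length m > 2k become integer intervals once the
  cycle is cut open at a point outside the arc, or, for arcs through 0, between k and k + 1,
  which is where the representative below cuts.\<close>

definition centered :: "nat \<Rightarrow> nat \<Rightarrow> nat \<Rightarrow> int" where
  "centered m k w = (if w \<le> k then int w else int w - int m)"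

lemma in_arc_through_zero:
  assumes "2 * k < m" "x + y \<le> k" "p < m" "w < m" "in_arc m x y p 0"
  shows "in_arc m x y p w \<longleftrightarrow> centered m k p - x \<le> centered m k w \<and> centered m k w \<le> centered m k p + y"
proof -
  have m: "0 < m" using assms by linarith
  show ?thesis using assms(1-4) assms(5)[unfolded in_arc_int[OF assms(3) m]]
    unfolding in_arc_int[OF assms(3,4)] centered_def by (auto split: if_splits)
qed

lemma in_arc_avoiding_zero:
  assumes "2 * k < m" "x + y \<le> k" "p < m" "w < m" "\<not> in_arc m x y p 0"
  shows "in_arc m x y p w \<longleftrightarrow> int p - x \<le> int w \<and> int w \<le> int p + y"
proof -
  have m: "0 < m" using assms by linarith
  show ?thesis using assms(1-4) assms(5)[unfolded in_arc_int[OF assms(3) m]]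
    unfolding in_arc_int[OF assms(3,4)] by (auto split: if_splits)
qed

lemma arc_through_zero:
  assumes "2 * k < m" "x + y \<le> k" "p < m" "0 \<in> arc m x y p"
  shows "arc m x y p = {w \<in> {..<m}. centered m k w \<in> {centered m k p - x .. centered m k p + y}}"
proof -
  have "in_arc m x y p 0" using assms unfolding arc_def by simp
  then show ?thesis using in_arc_through_zero[OF assms(1-3)] unfolding arc_def by auto
qed

lemma arc_avoiding_zero:
  assumes "2 * k < m" "x + y \<le> k" "p < m" "0 \<notin> arc m x y p"
  shows "arc m x y p = {w \<in> {..<m}. int w \<in> {int p - x .. int p + y}}"
proof -
  have "\<not> in_arc m x y p 0" using assms unfolding arc_def by simp
  then show ?thesis using in_arc_avoiding_zero[OF assms(1-3)] unfolding arc_def by auto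
qed

definition Int_within_third :: "'a set \<Rightarrow> 'a set \<Rightarrow> 'a set \<Rightarrow> bool" where
  "Int_within_third A B C \<longleftrightarrow> A \<inter> B \<subseteq> C \<or> B \<inter> C \<subseteq> A \<or> A \<inter> C \<subseteq> B"

lemma Int_within_third_intervals:
  fixes l1 r1 l2 r2 l3 r3 :: "'a::linorder"
  shows "Int_within_third {l1..r1} {l2..r2} {l3..r3}"
  unfolding Int_within_third_def subset_iff
  by (metis IntE atLeastAtMost_iff order.trans linorder_le_cases)

lemma Int_within_third_preimages:
  "Int_within_third I J K \<Longrightarrow> Int_within_third {u \<in> U. g u \<in> I} {u \<in> U. g u \<in> J} {u \<in> U. g u \<in> K}"
  unfolding Int_within_third_def by blast

lemma Int_within_third_image:
  assumes "inj_on f U" "A \<subseteq> U" "B \<subseteq> U" "C \<subseteq> U" "Int_within_third (f ` A) (f ` B) (f ` C)"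
  shows "Int_within_third A B C"
proof -
  have "\<And>X Y Z. X \<subseteq> U \<Longrightarrow> Y \<subseteq> U \<Longrightarrow> Z \<subseteq> U \<Longrightarrow> f ` X \<inter> f ` Y \<subseteq> f ` Z \<Longrightarrow> X \<inter> Y \<subseteq> Z"
    using assms(1) by (auto simp: inj_on_def subset_iff) blast
  with assms show ?thesis unfolding Int_within_third_def by meson
qed

lemma Int_within_third_arc_rotate:
  assumes "c < m" "p1 < m" "p2 < m" "p3 < m"
    "Int_within_third (arc m x1 y1 (cdist m c p1)) (arc m x2 y2 (cdist m c p2)) (arc m x3 y3 (cdist m c p3))"
  shows "Int_within_third (arc m x1 y1 p1) (arc m x2 y2 p2) (arc m x3 y3 p3)"
proof (rule Int_within_third_image)
  show "inj_on (cdist m c) {..<m}"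
    using cdist_inject_right assms(1) by (auto simp: inj_on_def)
  show "Int_within_third (cdist m c ` arc m x1 y1 p1) (cdist m c ` arc m x2 y2 p2) (cdist m c ` arc m x3 y3 p3)"
    using assms by (simp add: arc_rotate)
qed (auto simp: arc_def)

text \<open>A Helly-type property of short arcs: among three of them through a common point, two meet
  only inside the third.\<close>

lemma short_arcs_common_point:
  assumes "2 * k < m" "x1 + y1 \<le> k" "x2 + y2 \<le> k" "x3 + y3 \<le> k" "p1 < m" "p2 < m" "p3 < m"
    "c \<in> arc m x1 y1 p1" "c \<in> arc m x2 y2 p2" "c \<in> arc m x3 y3 p3"
  shows "Int_within_third (arc m x1 y1 p1) (arc m x2 y2 p2) (arc m x3 y3 p3)"
proof (rule Int_within_third_arc_rotate)
  have c: "c < m" using assms(8) by (simp add: arc_def)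
  then show "c < m" .
  have zero: "0 \<in> arc m x y (cdist m c p)" if "c \<in> arc m x y p" "p < m" for x y p
  proof -
    have "cdist m c c \<in> cdist m c ` arc m x y p" using that(1) by (rule imageI)
    then show ?thesis using arc_rotate[OF c that(2)] by simp
  qed
  show "Int_within_third (arc m x1 y1 (cdist m c p1)) (arc m x2 y2 (cdist m c p2)) (arc m x3 y3 (cdist m c p3))"
    unfolding arc_through_zero[OF assms(1,2) cdist_less[OF c assms(5)] zero[OF assms(8,5)]]
      arc_through_zero[OF assms(1,3) cdist_less[OF c assms(6)] zero[OF assms(9,6)]]
      arc_through_zero[OF assms(1,4) cdist_less[OF c assms(7)] zero[OF assms(10,7)]]
    by (rule Int_within_third_preimages[OF Int_within_third_intervals])
qed (use assms in auto)

lemma short_arcs_cover: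
  assumes "2 * k < m" "x1 + y1 \<le> k" "x2 + y2 \<le> k" "x3 + y3 \<le> k" "p1 < m" "p2 < m" "p3 < m"
    "\<not> Int_within_third (arc m x1 y1 p1) (arc m x2 y2 p2) (arc m x3 y3 p3)" "z < m"
  shows "z \<in> arc m x1 y1 p1 \<union> arc m x2 y2 p2 \<union> arc m x3 y3 p3"
proof (rule ccontr)
  assume "z \<notin> arc m x1 y1 p1 \<union> arc m x2 y2 p2 \<union> arc m x3 y3 p3"
  then have out: "z \<notin> arc m x1 y1 p1" "z \<notin> arc m x2 y2 p2" "z \<notin> arc m x3 y3 p3" by auto
  have zero: "0 \<notin> arc m x y (cdist m z p)" if z_out: "z \<notin> arc m x y p" and p: "p < m" for x y p
  proof
    assume "0 \<in> arc m x y (cdist m z p)"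
    then obtain w where w: "w \<in> arc m x y p" "cdist m z w = cdist m z z"
      using arc_rotate[OF assms(9) p] by (metis cdist_self imageE)
    then have "w = z" using cdist_inject_right[OF _ assms(9,9)] by (simp add: arc_def)
    with w z_out show False by simp
  qed
  have "Int_within_third (arc m x1 y1 (cdist m z p1)) (arc m x2 y2 (cdist m z p2)) (arc m x3 y3 (cdist m z p3))"
    unfolding arc_avoiding_zero[OF assms(1,2) cdist_less[OF assms(9,5)] zero[OF out(1) assms(5)]]
      arc_avoiding_zero[OF assms(1,3) cdist_less[OF assms(9,6)] zero[OF out(2) assms(6)]]
      arc_avoiding_zero[OF assms(1,4) cdist_less[OF assms(9,7)] zero[OF out(3) assms(7)]]
    by (rule Int_within_third_preimages[OF Int_within_third_intervals])
  with assms show False using Int_within_third_arc_rotate by blast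
qed


section \<open>Far zones\<close>

definition far_from :: "nat \<Rightarrow> nat \<Rightarrow> nat \<Rightarrow> nat \<Rightarrow> bool" where
  "far_from m k p w \<longleftrightarrow> k < cdist m p w \<and> k < cdist m w p"

lemma far_from_iff:
  assumes "m = 2 * k + d" "p < m" "w < m"
  shows "far_from m k p w \<longleftrightarrow> k + 1 \<le> cdist m p w \<and> cdist m p w + 1 \<le> k + d"
proof (cases "p = w")
  case False
  then have "cdist m w p = m - cdist m p w" using cdist_swap[OF assms(2,3)] by simp
  moreover have "cdist m p w < m" using cdist_less[OF assms(2,3)] .
  ultimately show ?thesis unfolding far_from_def using assms(1) by arith
qed (simp add: far_from_def)

lemma far_from_int:
  assumes "m = 2 * k + d" "p < m" "w < m"
  shows "far_from m k p w \<longleftrightarrow>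
   (int k + 1 \<le> (if p \<le> w then int w - int p else int m + int w - int p) \<and>
    (if p \<le> w then int w - int p else int m + int w - int p) + 1 \<le> int k + int d)"
  unfolding far_from_iff[OF assms] by (simp only: zle_int[symmetric] cdist_int[OF assms(2)] of_nat_add of_nat_1)

lemma far_from_rotate:
  "p < m \<Longrightarrow> w < m \<Longrightarrow> c < m \<Longrightarrow> far_from m k p w \<longleftrightarrow> far_from m k (cdist m c p) (cdist m c w)"
  unfolding far_from_def using cdist_rotate[of p m w c] cdist_rotate[of w m p c] by simp

lemma far_from_reflect:
  "p < m \<Longrightarrow> w < m \<Longrightarrow> far_from m k p w \<longleftrightarrow> far_from m k (reflect m p) (reflect m w)"
  unfolding far_from_def using cdist_reflect[of p m w] cdist_reflect[of w m p] by auto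

lemma far_from_commute: "far_from m k p w \<longleftrightarrow> far_from m k w p"
  unfolding far_from_def by auto

lemma not_far_from_if_in_arc: "in_arc m x y p q \<Longrightarrow> x + y \<le> k \<Longrightarrow> \<not> far_from m k p q"
  unfolding far_from_def using in_arc_close by fastforce

lemma card_far_from:
  assumes "m = 2 * k + d" "t < m"
  shows "d - 1 \<le> card {w. w < m \<and> far_from m k t w}"
proof -
  let ?f = "\<lambda>s. (t + s) mod m"
  have "inj_on ?f {k+1..<k+d}"
  proof (rule inj_onI)
    fix a b assume ab: "a \<in> {k+1..<k+d}" "b \<in> {k+1..<k+d}" "?f a = ?f b"
    then have "a < m" "b < m" using assms by auto
    then show "a = b" using cdist_add_mod[OF assms(2)] ab(3) by metis
  qed
  then have "card (?f ` {k+1..<k+d}) = d - 1" by (simp add: card_image)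
  moreover have "?f ` {k+1..<k+d} \<subseteq> {w. w < m \<and> far_from m k t w}"
  proof
    fix w assume "w \<in> ?f ` {k+1..<k+d}"
    then obtain s where s: "s \<in> {k+1..<k+d}" "w = ?f s" by blast
    then have "s < m" "w < m" using assms by auto
    moreover have "cdist m t w = s" using cdist_add_mod[OF assms(2) \<open>s < m\<close>] s by simp
    ultimately show "w \<in> {w. w < m \<and> far_from m k t w}"
      using s(1) far_from_iff[OF assms(1,2) \<open>w < m\<close>] by simp
  qed
  moreover have "finite {w. w < m \<and> far_from m k t w}" by simp
  ultimately show ?thesis by (metis card_mono)
qed

lemma in_arc_rightI: "a \<le> w \<Longrightarrow> int w - int a \<le> int y \<Longrightarrow> in_arc m x y a w"
  unfolding in_arc_def cdist_def by auto

lemma in_arc_leftI: "a < w \<Longrightarrow> int m + int a - int w \<le> int x \<Longrightarrow> in_arc m x y a w"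
  unfolding in_arc_def cdist_def by auto

lemma arc_triangle_at_zero_bounds:
  assumes "0 < p1" "p1 < p2" "p2 < m"
    "in_arc m x0 y0 0 p1" "\<not> in_arc m x0 y0 0 p2"
    "in_arc m x1 y1 p1 p2" "\<not> in_arc m x1 y1 p1 0"
    "in_arc m x2 y2 p2 0" "\<not> in_arc m x2 y2 p2 p1"
  shows "int p1 \<le> int y0" "int y0 < int p2" "int x0 < int m - int p2"
    "int p2 - int p1 \<le> int y1" "int y1 < int m - int p1" "int x1 < int p1"
    "int m - int p2 \<le> int y2" "int x2 < int p2 - int p1" "int y2 < int m - int p2 + int p1"
proof -
  have lt: "0 < m" "p1 < m" "p2 < m" using assms(1-3) by auto
  show "int p1 \<le> int y0" "int y0 < int p2" "int x0 < int m - int p2"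
    using assms(1-5) unfolding in_arc_int[OF lt(1) lt(2)] in_arc_int[OF lt(1) lt(3)] by auto
  show "int p2 - int p1 \<le> int y1" "int y1 < int m - int p1" "int x1 < int p1"
    using assms(1-3,6,7) unfolding in_arc_int[OF lt(2) lt(3)] in_arc_int[OF lt(2) lt(1)] by auto
  show "int m - int p2 \<le> int y2" "int x2 < int p2 - int p1" "int y2 < int m - int p2 + int p1"
    using assms(1-3,8,9) unfolding in_arc_int[OF lt(3) lt(1)] in_arc_int[OF lt(3) lt(2)] by auto
qed

text \<open>The normal form: the triangle 0, p1, p2 in increasing order and the extra arc centred
  at a in the gap between 0 and p1. Compatibility with p1 and p2 forces the arc of a to reach
  across p1 or p2, and the bounds on the triangle then place a far zone inside it.\<close>

lemma arc_contains_far_zone_normalized: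
  assumes "m = 2*k + d" "1 \<le> d" "0 < a" "a < p1" "p1 < p2" "p2 < m"
    "x0 + y0 \<le> k" "x1 + y1 \<le> k" "x2 + y2 \<le> k" "xj + yj \<le> k"
    "in_arc m x0 y0 0 p1" "\<not> in_arc m x0 y0 0 p2"
    "in_arc m x1 y1 p1 p2" "\<not> in_arc m x1 y1 p1 0"
    "in_arc m x2 y2 p2 0" "\<not> in_arc m x2 y2 p2 p1"
    "in_arc m x1 y1 p1 a \<or> in_arc m xj yj a p1"
    "in_arc m x2 y2 p2 a \<or> in_arc m xj yj a p2"
  shows "(\<forall>w<m. far_from m k 0 w \<longrightarrow> in_arc m xj yj a w) \<or>
    (\<forall>w<m. far_from m k p1 w \<longrightarrow> in_arc m xj yj a w) \<or>
    (\<forall>w<m. far_from m k p2 w \<longrightarrow> in_arc m xj yj a w)"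
proof -
  have lt: "a < m" "p1 < m" "p2 < m" using assms by auto
  have "0 < p1" using assms(3,4) by simp
  note F = arc_triangle_at_zero_bounds[OF this assms(5,6,11-16)]
  have K: "int x0 + int y0 \<le> int k" "int x1 + int y1 \<le> int k" "int x2 + int y2 \<le> int k"
    "int xj + int yj \<le> int k" "int m = 2 * int k + int d" "1 \<le> int d"
    using assms(1,2,7-10) by auto
  have I: "0 < int a" "int a < int p1" "int p1 < int p2" "int p2 < int m" using assms(3-6) by auto
  have J1: "in_arc m x1 y1 p1 a \<longleftrightarrow> int p1 - int a \<le> int x1"
    unfolding in_arc_int[OF lt(2) lt(1)] using I K F by auto
  have J2: "in_arc m x2 y2 p2 a \<longleftrightarrow> int m - int p2 + int a \<le> int y2"
    unfolding in_arc_int[OF lt(3) lt(1)] using I K F by auto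
  have A1: "in_arc m xj yj a p1 \<longleftrightarrow> int p1 - int a \<le> int yj"
    unfolding in_arc_int[OF lt(1) lt(2)] using I K F by auto
  have A2: "in_arc m xj yj a p2 \<longleftrightarrow> int p2 - int a \<le> int yj \<or> int m - int p2 + int a \<le> int xj"
    unfolding in_arc_int[OF lt(1) lt(3)] using I by auto
  have zone0: "\<forall>w<m. far_from m k 0 w \<longrightarrow> in_arc m xj yj a w" if "int p2 - int a \<le> int yj"
  proof (intro allI impI)
    fix w assume "w < m" "far_from m k 0 w"
    then have "int k + 1 \<le> int w" "int w + 1 \<le> int k + int d"
      using far_from_int[OF assms(1)] by simp_all
    with that I K F show "in_arc m xj yj a w" by (intro in_arc_rightI) linarith+
  qed
  have zone1: "\<forall>w<m. far_from m k p1 w \<longrightarrow> in_arc m xj yj a w" if "int m - int p2 + int a \<le> int xj"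
  proof (intro allI impI)
    fix w assume "w < m" "far_from m k p1 w"
    then have "p1 \<le> w \<and> int k + 1 \<le> int w - int p1"
      using far_from_int[OF assms(1) lt(2)] I K F by (auto split: if_splits)
    with that I K F show "in_arc m xj yj a w" by (intro in_arc_leftI) linarith+
  qed
  have zone2: "\<forall>w<m. far_from m k p2 w \<longrightarrow> in_arc m xj yj a w"
    if "int p1 - int a \<le> int yj" "int m - int p2 + int a \<le> int y2"
  proof (intro allI impI)
    fix w assume "w < m" "far_from m k p2 w"
    then have "w < p2 \<and> int k + 1 \<le> int m + int w - int p2 \<and> int m + int w - int p2 + 1 \<le> int k + int d"
      using far_from_int[OF assms(1) lt(3)] I K F by (auto split: if_splits)
    with that I K F show "in_arc m xj yj a w" by (intro in_arc_rightI) linarith+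
  qed
  have "\<not> (in_arc m x1 y1 p1 a \<and> in_arc m x2 y2 p2 a)"
    unfolding J1 J2 using K F by linarith
  then show ?thesis
    using assms(17,18) zone0 zone1 zone2 A1 A2 J2 by blast
qed


definition arc_triangle :: "nat \<Rightarrow> (nat \<Rightarrow> nat) \<Rightarrow> (nat \<Rightarrow> nat) \<Rightarrow> nat \<Rightarrow> nat \<Rightarrow> nat \<Rightarrow> bool" where
  "arc_triangle m x y a b c \<longleftrightarrow>
     in_arc m (x a) (y a) a b \<and> \<not> in_arc m (x a) (y a) a c \<and>
     in_arc m (x b) (y b) b c \<and> \<not> in_arc m (x b) (y b) b a \<and>
     in_arc m (x c) (y c) c a \<and> \<not> in_arc m (x c) (y c) c b"

lemma arc_triangle_rotate: "arc_triangle m x y a b c \<Longrightarrow> arc_triangle m x y b c a"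
  unfolding arc_triangle_def by blast

lemma arc_triangle_distinct: "arc_triangle m x y a b c \<Longrightarrow> a \<noteq> b \<and> b \<noteq> c \<and> c \<noteq> a"
  unfolding arc_triangle_def by auto

lemma in_arc_reflect_family:
  "p < m \<Longrightarrow> q < m \<Longrightarrow>
   in_arc m (y (reflect m (reflect m p))) (x (reflect m (reflect m p))) (reflect m p) (reflect m q)
   \<longleftrightarrow> in_arc m (x p) (y p) p q"
  by (simp add: reflect_reflect in_arc_reflect[of p m q "x p" "y p"])

lemma arc_triangle_reflect:
  assumes "a < m" "b < m" "c < m" "arc_triangle m x y a b c"
  shows "arc_triangle m (\<lambda>q. y (reflect m q)) (\<lambda>q. x (reflect m q)) (reflect m a) (reflect m b) (reflect m c)"
  using assms(4) unfolding arc_triangle_def in_arc_reflect_family[OF assms(1,2)] in_arc_reflect_family[OF assms(1,3)]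
    in_arc_reflect_family[OF assms(2,1)] in_arc_reflect_family[OF assms(2,3)]
    in_arc_reflect_family[OF assms(3,1)] in_arc_reflect_family[OF assms(3,2)] .

lemma arc_contains_far_zone_first_gap:
  assumes "m = 2*k + d" "1 \<le> d" "a < m" "b < m" "c < m" "j < m"
    "x a + y a \<le> k" "x b + y b \<le> k" "x c + y c \<le> k" "x j + y j \<le> k"
    "arc_triangle m x y a b c"
    "in_arc m (x b) (y b) b j \<or> in_arc m (x j) (y j) j b"
    "in_arc m (x c) (y c) c j \<or> in_arc m (x j) (y j) j c"
    "0 < cdist m a j" "cdist m a j < cdist m a b" "cdist m a b < cdist m a c"
  shows "\<exists>t\<in>{a, b, c}. \<forall>w<m. far_from m k t w \<longrightarrow> in_arc m (x j) (y j) j w"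
proof -
  let ?u = "cdist m a"
  have e: "\<And>X Y p z. p < m \<Longrightarrow> z < m \<Longrightarrow> in_arc m X Y p z \<longleftrightarrow> in_arc m X Y (?u p) (?u z)"
    using in_arc_rotate assms(3) by blast
  have "?u c < m" using cdist_less assms(3,5) by auto
  have Z: "(\<forall>w<m. far_from m k 0 w \<longrightarrow> in_arc m (x j) (y j) (?u j) w) \<or>
    (\<forall>w<m. far_from m k (?u b) w \<longrightarrow> in_arc m (x j) (y j) (?u j) w) \<or>
    (\<forall>w<m. far_from m k (?u c) w \<longrightarrow> in_arc m (x j) (y j) (?u j) w)"
  proof (rule arc_contains_far_zone_normalized[OF assms(1,2,14-16) \<open>?u c < m\<close> assms(7-10)])
    show "in_arc m (x a) (y a) 0 (?u b)" "\<not> in_arc m (x a) (y a) 0 (?u c)"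
      "in_arc m (x b) (y b) (?u b) (?u c)" "\<not> in_arc m (x b) (y b) (?u b) 0"
      "in_arc m (x c) (y c) (?u c) 0" "\<not> in_arc m (x c) (y c) (?u c) (?u b)"
      using assms(11) e assms(3-5) unfolding arc_triangle_def by (metis cdist_self)+
    show "in_arc m (x b) (y b) (?u b) (?u j) \<or> in_arc m (x j) (y j) (?u j) (?u b)"
      "in_arc m (x c) (y c) (?u c) (?u j) \<or> in_arc m (x j) (y j) (?u j) (?u c)"
      using assms(12,13) e assms(4-6) by blast+
  qed
  have unrotate: "\<forall>w<m. far_from m k t w \<longrightarrow> in_arc m (x j) (y j) j w"
    if "t < m" "\<forall>w<m. far_from m k (?u t) w \<longrightarrow> in_arc m (x j) (y j) (?u j) w" for t
  proof (intro allI impI)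
    fix w assume "w < m" "far_from m k t w"
    with that have "in_arc m (x j) (y j) (?u j) (?u w)"
      using far_from_rotate[OF that(1) _ assms(3)] cdist_less[OF assms(3)] by blast
    then show "in_arc m (x j) (y j) j w" using e[OF assms(6) \<open>w < m\<close>] by simp
  qed
  have "?u a = 0" by simp
  with Z have "\<exists>t\<in>{a, b, c}. \<forall>w<m. far_from m k (?u t) w \<longrightarrow> in_arc m (x j) (y j) (?u j) w"
    by (metis insertCI)
  then show ?thesis using unrotate assms(3-5) by blast
qed

text \<open>Rotating the triangle reduces to the case where j lies in the gap after a.\<close>

lemma arc_contains_far_zone_oriented:
  assumes "m = 2*k + d" "1 \<le> d" "a < m" "b < m" "c < m" "j < m"
    "x a + y a \<le> k" "x b + y b \<le> k" "x c + y c \<le> k" "x j + y j \<le> k"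
    "arc_triangle m x y a b c"
    "in_arc m (x a) (y a) a j \<or> in_arc m (x j) (y j) j a"
    "in_arc m (x b) (y b) b j \<or> in_arc m (x j) (y j) j b"
    "in_arc m (x c) (y c) c j \<or> in_arc m (x j) (y j) j c"
    "j \<notin> {a, b, c}" "cdist m a b < cdist m a c"
  shows "\<exists>t\<in>{a, b, c}. \<forall>w<m. far_from m k t w \<longrightarrow> in_arc m (x j) (y j) j w"
proof -
  let ?u = "cdist m a"
  have E: "\<And>p q. p < m \<Longrightarrow> q < m \<Longrightarrow> cdist m p q = cdist m (?u p) (?u q)"
    using cdist_rotate assms(3) by blast
  have ul: "?u b < m" "?u c < m" "?u j < m" using cdist_less assms(3-6) by auto
  have "a \<noteq> b" using arc_triangle_distinct[OF assms(11)] by blast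
  then have nz: "?u j \<noteq> 0" "?u j \<noteq> ?u b" "?u j \<noteq> ?u c" "?u b \<noteq> 0"
    using cdist_inject_right[of j m a a] cdist_inject_right[of j m b a] cdist_inject_right[of j m c a]
      cdist_inject_right[of b m a a] assms(3-6,15) by auto
  consider "?u j < ?u b" | "?u b < ?u j" "?u j < ?u c" | "?u c < ?u j"
    using nz by linarith
  then show ?thesis
  proof cases
    case 1
    show ?thesis
      by (rule arc_contains_far_zone_first_gap[OF assms(1-11,13,14)]) (use 1 nz assms(16) in auto)
  next
    case 2
    have "0 < cdist m b j" "cdist m b j < cdist m b c" "cdist m b c < cdist m b a"
      using 2 nz ul E[of b j] E[of b c] E[of b a] assms(3-6)
        cdist_le[of "?u b" "?u j" m] cdist_le[of "?u b" "?u c" m] cdist_gt[of 0 "?u b" m] by auto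
    from arc_contains_far_zone_first_gap[OF assms(1,2,4,5,3,6,8,9,7,10)
        arc_triangle_rotate[OF assms(11)] assms(14,12) this]
    show ?thesis by blast
  next
    case 3
    have "0 < cdist m c j" "cdist m c j < cdist m c a" "cdist m c a < cdist m c b"
      using 3 nz ul E[of c j] E[of c a] E[of c b] assms(3-6,16)
        cdist_le[of "?u c" "?u j" m] cdist_gt[of 0 "?u c" m] cdist_gt[of "?u b" "?u c" m] by auto
    from arc_contains_far_zone_first_gap[OF assms(1,2,5,3,4,6,9,7,8,10)
        arc_triangle_rotate[OF arc_triangle_rotate[OF assms(11)]] assms(12,13) this]
    show ?thesis by blast
  qed
qed

text \<open>The other orientation is reduced to the first one by reflecting the cycle.\<close>

lemma arc_contains_far_zone_reflected:
  assumes "m = 2*k + d" "1 \<le> d" "a < m" "b < m" "c < m" "j < m"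
    "x a + y a \<le> k" "x b + y b \<le> k" "x c + y c \<le> k" "x j + y j \<le> k"
    "arc_triangle m x y a b c"
    "in_arc m (x a) (y a) a j \<or> in_arc m (x j) (y j) j a"
    "in_arc m (x b) (y b) b j \<or> in_arc m (x j) (y j) j b"
    "in_arc m (x c) (y c) c j \<or> in_arc m (x j) (y j) j c"
    "j \<notin> {a, b, c}" "cdist m a c < cdist m a b"
  shows "\<exists>t\<in>{a, b, c}. \<forall>w<m. far_from m k t w \<longrightarrow> in_arc m (x j) (y j) j w"
proof -
  have ne: "a \<noteq> b" "c \<noteq> a" using arc_triangle_distinct[OF assms(11)] by auto
  let ?r = "reflect m" and ?x = "\<lambda>q. y (reflect m q)" and ?y = "\<lambda>q. x (reflect m q)"
  have r: "?r a < m" "?r b < m" "?r c < m" "?r j < m" using assms(3-6) reflect_less by auto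
  note M = in_arc_reflect_family[of _ m _ y x]
  have "cdist m (?r a) (?r b) < cdist m (?r a) (?r c)"
    using assms(16) cdist_reflect[OF assms(3,4)] cdist_reflect[OF assms(3,5)]
      cdist_swap[OF assms(3,4) ne(1)] cdist_swap[OF assms(3,5) ne(2)[symmetric]] by linarith
  moreover have "?r j \<noteq> ?r t" if "t < m" "t \<noteq> j" for t
    using that assms(6) by (metis reflect_reflect)
  then have "?r j \<notin> {?r a, ?r b, ?r c}" using assms(3-5,15) by auto
  moreover have sh: "?x (?r t) + ?y (?r t) \<le> k" if "t < m" "x t + y t \<le> k" for t
    using that reflect_reflect by simp
  moreover have cp: "in_arc m (?x (?r t)) (?y (?r t)) (?r t) (?r j) \<or>
      in_arc m (?x (?r j)) (?y (?r j)) (?r j) (?r t)"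
    if "t < m" "in_arc m (x t) (y t) t j \<or> in_arc m (x j) (y j) j t" for t
    using that M assms(6) by simp
  ultimately have "\<exists>t'\<in>{?r a, ?r b, ?r c}.
      \<forall>w<m. far_from m k t' w \<longrightarrow> in_arc m (?x (?r j)) (?y (?r j)) (?r j) w"
    using arc_contains_far_zone_oriented[OF assms(1,2) r sh[OF assms(3,7)] sh[OF assms(4,8)]
        sh[OF assms(5,9)] sh[OF assms(6,10)] arc_triangle_reflect[OF assms(3-5,11)]
        cp[OF assms(3,12)] cp[OF assms(4,13)] cp[OF assms(5,14)]]
    by blast
  then obtain t where t: "t \<in> {a, b, c}"
    "\<forall>w<m. far_from m k (?r t) w \<longrightarrow> in_arc m (?x (?r j)) (?y (?r j)) (?r j) w"
    by blast
  have "t < m" using t(1) assms(3-5) by auto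
  have "in_arc m (x j) (y j) j w" if "w < m" "far_from m k t w" for w
  proof -
    have "far_from m k (?r t) (?r w)" using that far_from_reflect[OF \<open>t < m\<close> that(1)] by simp
    then have "in_arc m (?x (?r j)) (?y (?r j)) (?r j) (?r w)" using t(2) reflect_less[OF that(1)] by blast
    then show ?thesis using M[OF assms(6) that(1)] by simp
  qed
  with t(1) show ?thesis by blast
qed

lemma arc_contains_far_zone:
  assumes "m = 2*k + d" "1 \<le> d" "a < m" "b < m" "c < m" "j < m"
    "x a + y a \<le> k" "x b + y b \<le> k" "x c + y c \<le> k" "x j + y j \<le> k"
    "arc_triangle m x y a b c"
    "in_arc m (x a) (y a) a j \<or> in_arc m (x j) (y j) j a"
    "in_arc m (x b) (y b) b j \<or> in_arc m (x j) (y j) j b"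
    "in_arc m (x c) (y c) c j \<or> in_arc m (x j) (y j) j c"
    "j \<notin> {a, b, c}"
  shows "\<exists>t\<in>{a, b, c}. \<forall>w<m. far_from m k t w \<longrightarrow> in_arc m (x j) (y j) j w"
proof -
  have "b \<noteq> c" using arc_triangle_distinct[OF assms(11)] by auto
  then have "cdist m a b \<noteq> cdist m a c" using cdist_inject_right[OF assms(4,5,3)] by metis
  then consider "cdist m a b < cdist m a c" | "cdist m a c < cdist m a b" by linarith
  then show ?thesis
    using arc_contains_far_zone_oriented[OF assms] arc_contains_far_zone_reflected[OF assms] by cases
qed

section \<open>Families of pairwise compatible short arcs\<close>

text \<open>Arc j of the family has centre j, left reach x j and right reach y j.\<close>

definition compatible_arcs :: "nat \<Rightarrow> nat \<Rightarrow> nat set \<Rightarrow> (nat \<Rightarrow> nat) \<Rightarrow> (nat \<Rightarrow> nat) \<Rightarrow> bool" where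
  "compatible_arcs m k J x y \<longleftrightarrow> J \<subseteq> {..<m} \<and> (\<forall>j\<in>J. x j + y j \<le> k) \<and>
     (\<forall>a\<in>J. \<forall>b\<in>J. a \<noteq> b \<longrightarrow> in_arc m (x a) (y a) a b \<or> in_arc m (x b) (y b) b a)"

lemma triangle_arcs_cover:
  assumes "2 * k < m" "compatible_arcs m k J x y" "a \<in> J" "b \<in> J" "c \<in> J" "arc_triangle m x y a b c"
  shows "m - card J \<le> (\<Sum>t\<in>{a, b, c}. card (arc m (x t) (y t) t - J))"
proof -
  have J: "J \<subseteq> {..<m}" "x a + y a \<le> k" "x b + y b \<le> k" "x c + y c \<le> k" "a < m" "b < m" "c < m"
    using assms(2-5) unfolding compatible_arcs_def by auto
  have "b \<in> arc m (x a) (y a) a \<inter> arc m (x b) (y b) b - arc m (x c) (y c) c"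
    "c \<in> arc m (x b) (y b) b \<inter> arc m (x c) (y c) c - arc m (x a) (y a) a"
    "a \<in> arc m (x a) (y a) a \<inter> arc m (x c) (y c) c - arc m (x b) (y b) b"
    using assms(6) J(5-7) unfolding arc_triangle_def arc_def by auto
  then have "\<not> Int_within_third (arc m (x a) (y a) a) (arc m (x b) (y b) b) (arc m (x c) (y c) c)"
    unfolding Int_within_third_def by blast
  then have "{..<m} \<subseteq> arc m (x a) (y a) a \<union> arc m (x b) (y b) b \<union> arc m (x c) (y c) c"
    using short_arcs_cover[OF assms(1) J(2-7)] by blast
  then have "{..<m} - J = (\<Union>t\<in>{a, b, c}. arc m (x t) (y t) t - J)"
    by (auto simp: arc_def)
  moreover have "card ({..<m} - J) = m - card J"
    using J(1) by (simp add: card_Diff_subset finite_subset)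
  ultimately show ?thesis
    using card_UN_le[of "{a, b, c}" "\<lambda>t. arc m (x t) (y t) t - J"] by simp
qed

lemma far_zone_outside_family:
  assumes "m = 2 * k + d" "1 \<le> d" "compatible_arcs m k J x y" "a \<in> J" "b \<in> J" "c \<in> J"
    "arc_triangle m x y a b c" "j \<in> J - {a, b, c}"
  shows "d - 1 \<le> card (arc m (x j) (y j) j - J)"
proof -
  have J: "J \<subseteq> {..<m}" "\<forall>j\<in>J. x j + y j \<le> k"
    "\<forall>a\<in>J. \<forall>b\<in>J. a \<noteq> b \<longrightarrow> in_arc m (x a) (y a) a b \<or> in_arc m (x b) (y b) b a"
    using assms(3) unfolding compatible_arcs_def by auto
  have lt: "a < m" "b < m" "c < m" "j < m" using J(1) assms(4-6,8) by auto
  have kt: "x a + y a \<le> k" "x b + y b \<le> k" "x c + y c \<le> k" "x j + y j \<le> k"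
    using J(2) assms(4-6,8) by auto
  have cmp: "in_arc m (x a) (y a) a j \<or> in_arc m (x j) (y j) j a"
    "in_arc m (x b) (y b) b j \<or> in_arc m (x j) (y j) j b"
    "in_arc m (x c) (y c) c j \<or> in_arc m (x j) (y j) j c"
    using J(3) assms(4-6,8) by auto
  obtain t where t: "t \<in> {a, b, c}" "\<forall>w<m. far_from m k t w \<longrightarrow> in_arc m (x j) (y j) j w"
    using arc_contains_far_zone[OF assms(1,2) lt kt assms(7) cmp] assms(8) by blast
  have "t < m" "t \<in> J" using t(1) lt assms(4-6) by auto
  have "{w. w < m \<and> far_from m k t w} \<subseteq> arc m (x j) (y j) j - J"
  proof
    fix w assume w: "w \<in> {w. w < m \<and> far_from m k t w}"
    have "w \<notin> J"
    proof
      assume "w \<in> J"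
      then have "w = t \<or> in_arc m (x t) (y t) t w \<or> in_arc m (x w) (y w) w t"
        using J(3) \<open>t \<in> J\<close> by blast
      moreover have "\<not> far_from m k t t" by (simp add: far_from_def)
      ultimately show False
        using w J(2) \<open>t \<in> J\<close> \<open>w \<in> J\<close>
        by (auto dest: not_far_from_if_in_arc simp: far_from_commute)
    qed
    then show "w \<in> arc m (x j) (y j) j - J" using w t(2) unfolding arc_def by auto
  qed
  then have "card {w. w < m \<and> far_from m k t w} \<le> card (arc m (x j) (y j) j - J)"
    by (intro card_mono) (simp_all add: arc_def)
  with card_far_from[OF assms(1) \<open>t < m\<close>] show ?thesis by linarith
qed

lemma card_pairs_le_sum:
  assumes "finite J" "\<forall>a\<in>J. \<forall>b\<in>J. a \<noteq> b \<longrightarrow> b \<in> I a \<or> a \<in> I b"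
  shows "card J * (card J - 1) \<le> 2 * (\<Sum>a\<in>J. card (I a \<inter> J - {a}))"
proof -
  let ?P = "Sigma J (\<lambda>a. I a \<inter> J - {a})"
  let ?O = "{p \<in> J \<times> J. fst p \<noteq> snd p}"
  have cP: "card ?P = (\<Sum>a\<in>J. card (I a \<inter> J - {a}))"
    using assms(1) by (subst card_SigmaI) auto
  have finP: "finite ?P" using assms(1) by simp
  have sub: "?O \<subseteq> ?P \<union> (\<lambda>(a,b). (b,a)) ` ?P"
  proof
    fix p assume p: "p \<in> ?O"
    then obtain a b where ab: "p = (a,b)" "a \<in> J" "b \<in> J" "a \<noteq> b" by auto
    show "p \<in> ?P \<union> (\<lambda>(a,b). (b,a)) ` ?P"
    proof (cases "b \<in> I a")
      case True then show ?thesis using ab by auto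
    next
      case False
      then have "(b,a) \<in> ?P" using ab assms(2) by auto
      then have "(\<lambda>(a,b). (b,a)) (b,a) \<in> (\<lambda>(a,b). (b,a)) ` ?P" by (rule imageI)
      then show ?thesis using ab by simp
    qed
  qed
  have "card ?O \<le> card (?P \<union> (\<lambda>(a,b). (b,a)) ` ?P)"
    by (rule card_mono[OF _ sub]) (use finP in simp)
  also have "\<dots> \<le> card ?P + card ((\<lambda>(a,b). (b,a)) ` ?P)" by (rule card_Un_le)
  also have "\<dots> \<le> 2 * card ?P" using card_image_le[OF finP, of "\<lambda>(a,b). (b,a)"] by simp
  finally have c1: "card ?O \<le> 2 * card ?P" .
  have "?O = J \<times> J - (\<lambda>a. (a,a)) ` J" by auto
  then have "card ?O = card (J \<times> J) - card ((\<lambda>a. (a,a)) ` J)"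
    using card_Diff_subset[of "(\<lambda>a. (a,a)) ` J" "J \<times> J"] assms(1) by auto
  moreover have "card ((\<lambda>a. (a,a)) ` J) = card J" by (rule card_image) (auto simp: inj_on_def)
  moreover have "card (J \<times> J) = card J * card J" by (simp add: card_cartesian_product)
  ultimately have "card ?O = card J * (card J - 1)" by (simp add: diff_mult_distrib2)
  then show ?thesis using c1 cP by simp
qed

lemma sum_card_arcs_lower_bound:
  assumes "m = 2 * k + d" "1 \<le> d" "compatible_arcs m k J x y" "a \<in> J" "b \<in> J" "c \<in> J"
    "arc_triangle m x y a b c"
  shows "2 * (m - card J) + 2 * ((card J - 3) * (d - 1)) + card J * (card J - 1) + 2 * card J
     \<le> 2 * (\<Sum>j\<in>J. card (arc m (x j) (y j) j))"
proof -
  let ?A = "\<lambda>j. arc m (x j) (y j) j"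
  let ?N = "card J"
  let ?C = "{a, b, c}"
  have J: "J \<subseteq> {..<m}" "finite J"
    "\<forall>a\<in>J. \<forall>b\<in>J. a \<noteq> b \<longrightarrow> in_arc m (x a) (y a) a b \<or> in_arc m (x b) (y b) b a"
    using assms(3) finite_subset unfolding compatible_arcs_def by auto
  have split: "card (?A j) = 1 + card (?A j \<inter> J - {j}) + card (?A j - J)" if "j \<in> J" for j
  proof -
    have j: "j \<in> ?A j \<inter> J" and fin: "finite (?A j)" using that J(1) by (auto simp: arc_def)
    then have "0 < card (?A j \<inter> J)" by (auto simp: card_gt_0_iff)
    with card_Int_Diff[OF fin, of J] card_Diff_singleton[OF j] show ?thesis by linarith
  qed
  have "(\<Sum>j\<in>J. card (?A j)) = (\<Sum>j\<in>J. 1 + card (?A j \<inter> J - {j}) + card (?A j - J))"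
    using split by (rule sum.cong[OF refl])
  then have "(\<Sum>j\<in>J. card (?A j)) = ?N + (\<Sum>j\<in>J. card (?A j \<inter> J - {j})) + (\<Sum>j\<in>J. card (?A j - J))"
    by (simp only: sum.distrib card_eq_sum)
  moreover have "?N * (?N - 1) \<le> 2 * (\<Sum>j\<in>J. card (?A j \<inter> J - {j}))"
    using J by (intro card_pairs_le_sum) (auto simp: arc_def)
  moreover have "(m - ?N) + (?N - 3) * (d - 1) \<le> (\<Sum>j\<in>J. card (?A j - J))"
  proof -
    have "?C \<subseteq> J" using assms(4-6) by auto
    have "card ?C = 3" using arc_triangle_distinct[OF assms(7)] by auto
    then have "card (J - ?C) = ?N - 3"
      using card_Diff_subset[OF _ \<open>?C \<subseteq> J\<close>] by simp
    then have "(?N - 3) * (d - 1) \<le> (\<Sum>j\<in>J - ?C. card (?A j - J))"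
      using far_zone_outside_family[OF assms] sum_bounded_below[of "J - ?C" "d - 1"] by simp
    moreover have "m - ?N \<le> (\<Sum>t\<in>?C. card (?A t - J))"
      using triangle_arcs_cover[OF _ assms(3-7)] assms(1,2) by simp
    ultimately show ?thesis
      using sum.subset_diff[OF \<open>?C \<subseteq> J\<close> J(2), of "\<lambda>j. card (?A j - J)"] by linarith
  qed
  ultimately show ?thesis by linarith
qed

section \<open>Chordless cycles\<close>

definition closed_walk :: "'a rel \<Rightarrow> nat \<Rightarrow> (nat \<Rightarrow> 'a) \<Rightarrow> bool" where
  "closed_walk R N c \<longleftrightarrow> 0 < N \<and> c N = c 0 \<and> (\<forall>i<N. (c i, c (Suc i)) \<in> R)"

definition chordless_cycle :: "'a rel \<Rightarrow> nat \<Rightarrow> (nat \<Rightarrow> 'a) \<Rightarrow> bool" where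
  "chordless_cycle R N c \<longleftrightarrow> closed_walk R N c \<and>
     (\<forall>i<N. \<forall>j<N. (c i, c j) \<in> R \<longrightarrow> j = Suc i \<or> (Suc i = N \<and> j = 0))"

lemma closed_walk_if_not_acyclic: "\<not> acyclic R \<Longrightarrow> \<exists>N c. closed_walk R N c"
proof -
  assume "\<not> acyclic R"
  then obtain x where "(x, x) \<in> R\<^sup>+" unfolding acyclic_def by blast
  then obtain N where N: "0 < N" "(x, x) \<in> R ^^ N" using trancl_power by blast
  then obtain c where "c 0 = x" "c N = x" "\<forall>i<N. (c i, c (Suc i)) \<in> R"
    unfolding relpow_fun_conv by blast
  with N(1) show ?thesis unfolding closed_walk_def by auto
qed

text \<open>A chord (c a, c b) of a closed walk c gives a shorter closed walk: go directly from c a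
  to c b, either skipping the stretch after a, or closing up the stretch from b to a.\<close>

lemma closed_walk_shortcut:
  assumes "closed_walk R N c" "a < N" "b < N" "(c a, c b) \<in> R"
    "\<not> (b = Suc a \<or> (Suc a = N \<and> b = 0))"
  shows "\<exists>N' < N. \<exists>c'. closed_walk R N' c'"
proof -
  have walk: "c N = c 0" "\<forall>i<N. (c i, c (Suc i)) \<in> R" using assms(1) unfolding closed_walk_def by auto
  show ?thesis
  proof (cases "Suc a < b")
    case True
    define \<delta> where "\<delta> = b - Suc a"
    define c' where "c' = (\<lambda>i. if i \<le> a then c i else c (i + \<delta>))"
    have "closed_walk R (N - \<delta>) c'"
      unfolding closed_walk_def
    proof (intro conjI allI impI)
      show "0 < N - \<delta>" "c' (N - \<delta>) = c' 0"
        using True assms(3) walk(1) unfolding c'_def \<delta>_def by auto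
      fix i assume i: "i < N - \<delta>"
      consider "i < a" | "i = a" | "a < i" by linarith
      then show "(c' i, c' (Suc i)) \<in> R"
      proof cases
        case 3
        with i True have "i + \<delta> < N" unfolding \<delta>_def by linarith
        with 3 walk(2) show ?thesis unfolding c'_def by auto
      qed (use assms(2,4) walk(2) True in \<open>auto simp: c'_def \<delta>_def\<close>)
    qed
    moreover have "N - \<delta> < N" using True assms(3) unfolding \<delta>_def by auto
    ultimately show ?thesis by blast
  next
    case False
    with assms(5) have "b \<le> a" by auto
    define c' where "c' = (\<lambda>i. if i \<le> a - b then c (b + i) else c b)"
    have "closed_walk R (Suc (a - b)) c'"
      unfolding closed_walk_def
    proof (intro conjI allI impI)
      fix i assume "i < Suc (a - b)"
      then consider "i < a - b" | "i = a - b" by linarith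
      then show "(c' i, c' (Suc i)) \<in> R"
        by cases (use assms(2,4) walk(2) \<open>b \<le> a\<close> in \<open>auto simp: c'_def\<close>)
    qed (simp_all add: c'_def)
    moreover have "Suc (a - b) < N" using assms(2,5) \<open>b \<le> a\<close> by auto
    ultimately show ?thesis by blast
  qed
qed

lemma chordless_cycle_if_not_acyclic:
  assumes "\<not> acyclic R"
  shows "\<exists>N c. chordless_cycle R N c"
proof -
  define N where "N = (LEAST N. \<exists>c. closed_walk R N c)"
  obtain c where c: "closed_walk R N c"
    using LeastI_ex[of "\<lambda>N. \<exists>c. closed_walk R N c"] closed_walk_if_not_acyclic[OF assms]
    unfolding N_def by blast
  have shortest: "\<not> closed_walk R N' c'" if "N' < N" for N' c'
    using that not_less_Least unfolding N_def by blast
  have "chordless_cycle R N c"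
    unfolding chordless_cycle_def
  proof (intro conjI allI impI c)
    fix i j assume ij: "i < N" "j < N" "(c i, c j) \<in> R"
    show "j = Suc i \<or> (Suc i = N \<and> j = 0)"
    proof (rule ccontr)
      assume "\<not> (j = Suc i \<or> (Suc i = N \<and> j = 0))"
      with closed_walk_shortcut[OF c ij] shortest show False by blast
    qed
  qed
  then show ?thesis by blast
qed

definition arc_digraph :: "nat \<Rightarrow> nat set \<Rightarrow> (nat \<Rightarrow> nat) \<Rightarrow> (nat \<Rightarrow> nat) \<Rightarrow> nat rel" where
  "arc_digraph m J x y = {(a, b). a \<in> J \<and> b < m \<and> \<not> in_arc m (x a) (y a) a b}"

lemma chordless_cycle_arc_digraph:
  assumes "2 * k < m" "compatible_arcs m k J x y" "chordless_cycle (arc_digraph m J x y) N c"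
  shows "N = 3 \<and> c 0 \<in> J \<and> c 1 \<in> J \<and> c 2 \<in> J \<and> arc_triangle m x y (c 0) (c 2) (c 1)"
proof -
  let ?A = "\<lambda>i. arc m (x (c i)) (y (c i)) (c i)"
  have J: "J \<subseteq> {..<m}" "\<forall>j\<in>J. x j + y j \<le> k"
    "\<forall>a\<in>J. \<forall>b\<in>J. a \<noteq> b \<longrightarrow> in_arc m (x a) (y a) a b \<or> in_arc m (x b) (y b) b a"
    using assms(2) unfolding compatible_arcs_def by auto
  have cyc: "0 < N" "c N = c 0" "\<forall>i<N. (c i, c (Suc i)) \<in> arc_digraph m J x y"
    "\<forall>i<N. \<forall>j<N. (c i, c j) \<in> arc_digraph m J x y \<longrightarrow> j = Suc i \<or> (Suc i = N \<and> j = 0)"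
    using assms(3) unfolding chordless_cycle_def closed_walk_def by auto
  have inJ: "c i \<in> J" "c i < m" if "i < N" for i
    using cyc(3) that J(1) unfolding arc_digraph_def by auto
  have edge: "\<not> in_arc m (x (c i)) (y (c i)) (c i) (c (Suc i))" if "i < N" for i
    using cyc(3) that unfolding arc_digraph_def by auto
  have chord: "in_arc m (x (c i)) (y (c i)) (c i) (c j)"
    if "i < N" "j < N" "\<not> (j = Suc i \<or> (Suc i = N \<and> j = 0))" for i j
    using cyc(4) that inJ unfolding arc_digraph_def by blast
  consider "N = 1" | "N = 2" | "N = 3" | "4 \<le> N" using cyc(1) by linarith
  then show ?thesis
  proof cases
    case 1
    with edge[of 0] cyc(2) show ?thesis by simp
  next
    case 2
    then have "\<not> in_arc m (x (c 0)) (y (c 0)) (c 0) (c 1)" "\<not> in_arc m (x (c 1)) (y (c 1)) (c 1) (c 0)"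
      "c 0 \<in> J" "c 1 \<in> J"
      using edge[of 0] edge[of 1] cyc(2) inJ by (auto simp: numeral_2_eq_2)
    with J(3) show ?thesis by (metis in_arc_self)
  next
    case 3
    then show ?thesis
      using inJ edge[of 0] edge[of 1] edge[of 2] cyc(2) chord[of 1 0] chord[of 2 1] chord[of 0 2]
      by (simp add: arc_triangle_def numeral_2_eq_2 numeral_3_eq_3)
  next
    case 4
    have lt: "c 0 < m" "c 1 < m" "c 2 < m" "c 3 < m" using inJ 4 by auto
    have short: "x (c i) + y (c i) \<le> k" if "i < N" for i using J(2) inJ(1)[OF that] by blast
    have "c 0 \<in> ?A 0" "c 0 \<in> ?A 1" "c 0 \<in> ?A 2"
      using lt chord[of 1 0] chord[of 2 0] 4 by (auto simp: arc_def)
    then have "Int_within_third (?A 0) (?A 1) (?A 2)"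
      using short_arcs_common_point[OF assms(1) short short short lt(1-3)] 4 by simp
    moreover have "c 3 \<in> ?A 0 \<inter> ?A 1 - ?A 2" "c 1 \<in> ?A 1 \<inter> ?A 2 - ?A 0" "c 2 \<in> ?A 0 \<inter> ?A 2 - ?A 1"
      using lt 4 chord[of 0 3] chord[of 1 3] chord[of 2 1] chord[of 0 2] edge[of 0] edge[of 1] edge[of 2]
      by (auto simp: arc_def numeral_2_eq_2 numeral_3_eq_3)
    ultimately show ?thesis unfolding Int_within_third_def by blast
  qed
qed


section \<open>Arcs of an independent set in the crown\<close>

lemma crown_less_CA_CB_iff:
  assumes "k < n"
  shows "crown_less n k (CA i) (CB j) \<longleftrightarrow> i < n + k \<and> j < n + k \<and> k < cdist (n + k) i j"
  using assms ex_mod_le_iff_cdist_le[of i "n + k" j k] unfolding crown_less_def by auto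

lemma crown_less_cases: "crown_less n k x y \<Longrightarrow> \<exists>i j. x = CA i \<and> y = CB j"
  unfolding crown_less_def by auto

lemma crown_Inc_iff:
  "k < n \<Longrightarrow> p \<in> crown_Inc n k \<longleftrightarrow>
     (\<exists>i j. p = (CA i, CB j) \<and> i < n + k \<and> j < n + k \<and> cdist (n + k) i j \<le> k)"
  unfolding crown_Inc_def using crown_less_CA_CB_iff[of k n] by auto

definition tops :: "(cel \<times> cel) set \<Rightarrow> nat set" where
  "tops S = {j. \<exists>i. (CA i, CB j) \<in> S}"

definition partners :: "(cel \<times> cel) set \<Rightarrow> nat \<Rightarrow> nat set" where
  "partners S j = {i. (CA i, CB j) \<in> S}"

definition partner_dists :: "nat \<Rightarrow> (cel \<times> cel) set \<Rightarrow> nat \<Rightarrow> nat set" where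
  "partner_dists m S j = (\<lambda>i. cdist m i j) ` partners S j"

text \<open>The partners a_i of b_j lie between left_reach and k - right_reach steps before j; the arc
  of j with these reaches is exactly the set of b_z incomparable to all of them.\<close>

definition left_reach :: "nat \<Rightarrow> (cel \<times> cel) set \<Rightarrow> nat \<Rightarrow> nat" where
  "left_reach m S j = Min (partner_dists m S j)"

definition right_reach :: "nat \<Rightarrow> nat \<Rightarrow> (cel \<times> cel) set \<Rightarrow> nat \<Rightarrow> nat" where
  "right_reach m k S j = k - Max (partner_dists m S j)"

lemma Inc_pair_bounds:
  assumes "k < n" "S \<subseteq> crown_Inc n k" "(CA i, CB j) \<in> S"
  shows "i < n + k \<and> j < n + k \<and> cdist (n + k) i j \<le> k"
  using assms(2,3) crown_Inc_iff[OF assms(1), of "(CA i, CB j)"] by auto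

lemma tops_partners_bounded:
  assumes "k < n" "S \<subseteq> crown_Inc n k"
  shows "tops S \<subseteq> {..<n + k}" "finite (tops S)" "partners S j \<subseteq> {..<n + k}" "finite (partners S j)"
    "j \<in> tops S \<Longrightarrow> partners S j \<noteq> {}"
proof -
  show "tops S \<subseteq> {..<n + k}" unfolding tops_def using Inc_pair_bounds[OF assms] by auto
  then show "finite (tops S)" using finite_subset by blast
  show "partners S j \<subseteq> {..<n + k}" unfolding partners_def using Inc_pair_bounds[OF assms] by auto
  then show "finite (partners S j)" using finite_subset by blast
  show "j \<in> tops S \<Longrightarrow> partners S j \<noteq> {}" unfolding tops_def partners_def by auto
qed

lemma partner_dists_bounds:
  assumes "k < n" "S \<subseteq> crown_Inc n k" "j \<in> tops S"
  shows "\<And>i. i \<in> partners S j \<Longrightarrow>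
      left_reach (n + k) S j \<le> cdist (n + k) i j \<and> cdist (n + k) i j \<le> Max (partner_dists (n + k) S j)"
    "Max (partner_dists (n + k) S j) \<le> k"
    "\<exists>i\<in>partners S j. cdist (n + k) i j = left_reach (n + k) S j"
    "\<exists>i\<in>partners S j. cdist (n + k) i j = Max (partner_dists (n + k) S j)"
proof -
  have fin: "finite (partner_dists (n + k) S j)" and ne: "partner_dists (n + k) S j \<noteq> {}"
    unfolding partner_dists_def using tops_partners_bounded[OF assms(1,2)] assms(3) by simp_all
  show "\<And>i. i \<in> partners S j \<Longrightarrow>
      left_reach (n + k) S j \<le> cdist (n + k) i j \<and> cdist (n + k) i j \<le> Max (partner_dists (n + k) S j)"
    unfolding left_reach_def using fin by (auto simp: partner_dists_def)
  have "\<forall>d\<in>partner_dists (n + k) S j. d \<le> k"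
    unfolding partner_dists_def partners_def using Inc_pair_bounds[OF assms(1,2)] by auto
  then show "Max (partner_dists (n + k) S j) \<le> k" using fin ne by simp
  show "\<exists>i\<in>partners S j. cdist (n + k) i j = left_reach (n + k) S j"
    using Min_in[OF fin ne] unfolding left_reach_def partner_dists_def by auto
  show "\<exists>i\<in>partners S j. cdist (n + k) i j = Max (partner_dists (n + k) S j)"
    using Max_in[OF fin ne] unfolding partner_dists_def by auto
qed

lemma reach_sum_le:
  assumes "k < n" "S \<subseteq> crown_Inc n k" "j \<in> tops S"
  shows "left_reach (n + k) S j + right_reach (n + k) k S j \<le> k"
proof -
  obtain i where "i \<in> partners S j" "cdist (n + k) i j = left_reach (n + k) S j"
    using partner_dists_bounds(3)[OF assms] by blast
  then have "left_reach (n + k) S j \<le> Max (partner_dists (n + k) S j)"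
    using partner_dists_bounds(1)[OF assms] by fastforce
  with partner_dists_bounds(2)[OF assms] show ?thesis unfolding right_reach_def by linarith
qed

lemma reach_window_arith:
  "m - f \<le> X \<or> f \<le> k - M \<Longrightarrow> X \<le> D \<Longrightarrow> D \<le> M \<Longrightarrow> M \<le> k \<Longrightarrow> f < m \<Longrightarrow> k < m \<Longrightarrow>
   (if D + f < m then D + f else D + f - m) \<le> (k::nat)"
  by (cases "D + f < m") auto

lemma reach_window_arith_converse:
  "(if X + f < m then X + f else X + f - m) \<le> k \<Longrightarrow> (if M + f < m then M + f else M + f - m) \<le> k \<Longrightarrow>
   X \<le> M \<Longrightarrow> M \<le> k \<Longrightarrow> f < m \<Longrightarrow> 2 * k < (m::nat) \<Longrightarrow> m - f \<le> X \<or> f \<le> k - M"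
  by (cases "X + f < m"; cases "M + f < m") auto

lemma in_reach_arc_iff:
  assumes "k < n" "S \<subseteq> crown_Inc n k" "j \<in> tops S" "z < n + k"
  shows "in_arc (n + k) (left_reach (n + k) S j) (right_reach (n + k) k S j) j z \<longleftrightarrow>
    (\<forall>i\<in>partners S j. cdist (n + k) i z \<le> k)"
proof -
  let ?m = "n + k"
  let ?X = "left_reach ?m S j" let ?M = "Max (partner_dists ?m S j)"
  have jm: "j < ?m" using tops_partners_bounded(1)[OF assms(1,2)] assms(3) by auto
  have km: "k < ?m" using assms(1) by simp
  have Di: "\<And>i. i \<in> partners S j \<Longrightarrow> ?X \<le> cdist ?m i j \<and> cdist ?m i j \<le> ?M \<and> i < ?m"
    using partner_dists_bounds(1)[OF assms(1-3)] tops_partners_bounded(3)[OF assms(1,2)] by auto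
  have Mk: "?M \<le> k" by (rule partner_dists_bounds(2)[OF assms(1-3)])
  obtain i0 where i0: "i0 \<in> partners S j" "cdist ?m i0 j = ?X" using partner_dists_bounds(3)[OF assms(1-3)] by blast
  obtain i1 where i1: "i1 \<in> partners S j" "cdist ?m i1 j = ?M" using partner_dists_bounds(4)[OF assms(1-3)] by blast
  have add: "\<And>i. i < ?m \<Longrightarrow> cdist ?m i z =
      (if cdist ?m i j + cdist ?m j z < ?m then cdist ?m i j + cdist ?m j z
       else cdist ?m i j + cdist ?m j z - ?m)"
    using cdist_add_cdist jm assms(4) by blast
  have fz: "cdist ?m j z < ?m" using cdist_less jm assms(4) by blast
  show ?thesis
  proof (cases "z = j")
    case True
    then show ?thesis using in_arc_self[of ?m ?X "right_reach ?m k S j" j] Di Mk by force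
  next
    case False
    have sw: "cdist ?m z j = ?m - cdist ?m j z" using cdist_swap[OF jm assms(4)] False by auto
    show ?thesis
    proof
      assume h: "in_arc ?m ?X (right_reach ?m k S j) j z"
      show "\<forall>i\<in>partners S j. cdist ?m i z \<le> k"
      proof
        fix i assume i: "i \<in> partners S j"
        note Dii = Di[OF i]
        from h have "cdist ?m z j \<le> ?X \<or> cdist ?m j z \<le> k - ?M" unfolding in_arc_def right_reach_def .
        then have "?m - cdist ?m j z \<le> ?X \<or> cdist ?m j z \<le> k - ?M" using sw by simp
        from reach_window_arith[OF this _ _ Mk fz km, of "cdist ?m i j"] show "cdist ?m i z \<le> k"
          using add[of i] Dii by simp
      qed
    next
      assume h: "\<forall>i\<in>partners S j. cdist ?m i z \<le> k"
      have h0: "cdist ?m i0 z \<le> k" "cdist ?m i1 z \<le> k" using h i0(1) i1(1) by auto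
      have k2: "2 * k < ?m" using assms(1) by simp
      have e0: "cdist ?m i0 z = (if ?X + cdist ?m j z < ?m then ?X + cdist ?m j z else ?X + cdist ?m j z - ?m)"
        using add[of i0] i0(2) Di[OF i0(1)] by simp
      have e1: "cdist ?m i1 z = (if ?M + cdist ?m j z < ?m then ?M + cdist ?m j z else ?M + cdist ?m j z - ?m)"
        using add[of i1] i1(2) Di[OF i1(1)] by simp
      have XM: "?X \<le> ?M" using Di[OF i0(1)] by simp
      have "?m - cdist ?m j z \<le> ?X \<or> cdist ?m j z \<le> k - ?M"
        by (rule reach_window_arith_converse[OF h0(1)[unfolded e0] h0(2)[unfolded e1] XM Mk fz k2])
      then have "cdist ?m z j \<le> ?X \<or> cdist ?m j z \<le> k - ?M" using sw by simp
      then show "in_arc ?m ?X (right_reach ?m k S j) j z" unfolding in_arc_def right_reach_def .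
    qed
  qed
qed


lemma card_partners_add_card_arc:
  assumes "k < n" "S \<subseteq> crown_Inc n k" "j \<in> tops S"
  shows "card (partners S j) + card (arc (n + k) (left_reach (n + k) S j) (right_reach (n + k) k S j) j) \<le> k + 2"
proof -
  let ?m = "n + k"
  let ?X = "left_reach ?m S j" let ?M = "Max (partner_dists ?m S j)"
  have jm: "j < ?m" using tops_partners_bounded(1)[OF assms(1,2)] assms(3) by auto
  have Di: "\<And>i. i \<in> partners S j \<Longrightarrow> ?X \<le> cdist ?m i j \<and> cdist ?m i j \<le> ?M"
    using partner_dists_bounds(1)[OF assms(1-3)] by auto
  have Mk: "?M \<le> k" by (rule partner_dists_bounds(2)[OF assms(1-3)])
  obtain i0 where i0: "i0 \<in> partners S j" using tops_partners_bounded(5)[OF assms(1,2,3)] by blast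
  have XM: "?X \<le> ?M" using Di[OF i0] by simp
  have c1: "card (partners S j) \<le> card {?X..?M}"
  proof (rule card_inj_on_le)
    show "inj_on (\<lambda>i. cdist ?m i j) (partners S j)"
    proof (rule inj_onI)
      fix a b assume ab: "a \<in> partners S j" "b \<in> partners S j" "cdist ?m a j = cdist ?m b j"
      have "a < ?m" "b < ?m" using ab(1,2) tops_partners_bounded(3)[OF assms(1,2)] by auto
      then show "a = b" using cdist_inject_left jm ab(3) by blast
    qed
    show "(\<lambda>i. cdist ?m i j) ` partners S j \<subseteq> {?X..?M}" using Di by auto
  qed simp
  have "card (arc ?m ?X (right_reach ?m k S j) j) \<le> ?X + (k - ?M) + 1"
    using card_arc_le[OF jm] unfolding right_reach_def .
  with c1 XM Mk show ?thesis by simp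
qed

lemma reach_arcs_compatible:
  assumes "k < n" "S \<subseteq> crown_Inc n k" "crown_independent n k S" "a \<in> tops S" "b \<in> tops S" "a \<noteq> b"
  shows "in_arc (n + k) (left_reach (n + k) S a) (right_reach (n + k) k S a) a b \<or>
    in_arc (n + k) (left_reach (n + k) S b) (right_reach (n + k) k S b) b a"
proof (rule ccontr)
  assume h: "\<not> ?thesis"
  have am: "a < n + k" "b < n + k" using tops_partners_bounded(1)[OF assms(1,2)] assms(4,5) by auto
  obtain i where i: "i \<in> partners S a" "\<not> cdist (n + k) i b \<le> k"
    using h in_reach_arc_iff[OF assms(1,2,4) am(2)] by blast
  obtain i' where i': "i' \<in> partners S b" "\<not> cdist (n + k) i' a \<le> k"
    using h in_reach_arc_iff[OF assms(1,2,5) am(1)] by blast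
  have im: "i < n + k" "i' < n + k" using tops_partners_bounded(3)[OF assms(1,2)] i(1) i'(1) by auto
  have "crown_adj n k (CA i, CB a) (CA i', CB b)"
    unfolding crown_adj_def using crown_less_CA_CB_iff[OF assms(1)] im am i(2) i'(2) by simp
  moreover have "(CA i, CB a) \<in> S" "(CA i', CB b) \<in> S" using i(1) i'(1) unfolding partners_def by auto
  ultimately show False using assms(3) unfolding crown_independent_def by blast
qed

lemma card_eq_sum_card_partners:
  assumes "k < n" "S \<subseteq> crown_Inc n k"
  shows "card S = (\<Sum>j\<in>tops S. card (partners S j))"
proof -
  have eq: "S = (\<lambda>(j,i). (CA i, CB j)) ` (Sigma (tops S) (partners S))"
  proof
    show "S \<subseteq> (\<lambda>(j,i). (CA i, CB j)) ` (Sigma (tops S) (partners S))"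
    proof
      fix p assume p: "p \<in> S"
      then obtain i j where ij: "p = (CA i, CB j)" using assms(2) crown_Inc_iff[OF assms(1)] by blast
      then have "(j,i) \<in> Sigma (tops S) (partners S)" using p unfolding tops_def partners_def by auto
      then show "p \<in> (\<lambda>(j,i). (CA i, CB j)) ` (Sigma (tops S) (partners S))" using ij by force
    qed
    show "(\<lambda>(j,i). (CA i, CB j)) ` (Sigma (tops S) (partners S)) \<subseteq> S"
      unfolding tops_def partners_def by auto
  qed
  have inj: "inj_on (\<lambda>(j,i). (CA i, CB j)) (Sigma (tops S) (partners S))" by (auto simp: inj_on_def)
  have "card S = card (Sigma (tops S) (partners S))" using eq card_image[OF inj] by simp
  also have "\<dots> = (\<Sum>j\<in>tops S. card (partners S j))"
    using tops_partners_bounded(2,4)[OF assms(1,2)] by simp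
  finally show ?thesis .
qed


section \<open>Reversibility from acyclicity\<close>

lemma card_trancl_predecessors_less:
  assumes "finite R" "acyclic R" "(a, b) \<in> R"
  shows "card {c. (c, a) \<in> R\<^sup>+} < card {c. (c, b) \<in> R\<^sup>+}"
proof (rule psubset_card_mono)
  have "{c. (c, b) \<in> R\<^sup>+} \<subseteq> fst ` R" by (force dest: tranclD)
  then show "finite {c. (c, b) \<in> R\<^sup>+}" using assms(1) finite_subset by blast
  have "(a, a) \<notin> R\<^sup>+" using assms(2) unfolding acyclic_def by blast
  then show "{c. (c, a) \<in> R\<^sup>+} \<subset> {c. (c, b) \<in> R\<^sup>+}"
    using assms(3) by (auto intro: trancl_into_trancl)
qed

lemma linear_order_on_key_le:
  fixes key :: "'a \<Rightarrow> nat"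
  assumes "inj_on key A"
  shows "linear_order_on A {(u, v). u \<in> A \<and> v \<in> A \<and> key u \<le> key v}"
  unfolding linear_order_on_def partial_order_on_def preorder_on_def refl_on_def
    antisym_on_def trans_on_def total_on_def
  using assms by (auto simp: inj_on_def)

lemma crown_reversible_if_key:
  fixes key :: "cel \<Rightarrow> nat"
  assumes "S \<subseteq> crown_Inc n k" "inj_on key (crown_ground n k)"
    "\<And>x y. crown_less n k x y \<Longrightarrow> key x < key y"
    "\<And>a b. (a, b) \<in> S \<Longrightarrow> key b < key a"
  shows "crown_reversible n k S"
proof -
  let ?G = "crown_ground n k"
  define L where "L = {(u, v). u \<in> ?G \<and> v \<in> ?G \<and> key u \<le> key v}"
  have "x \<in> ?G \<and> y \<in> ?G" if "crown_less n k x y" for x y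
    using that unfolding crown_less_def crown_ground_def by auto
  then have "\<forall>x y. crown_less n k x y \<longrightarrow> (x, y) \<in> L"
    using assms(3) unfolding L_def by fastforce
  moreover have "a \<in> ?G \<and> b \<in> ?G" if "(a, b) \<in> S" for a b
    using that assms(1) unfolding crown_Inc_def crown_ground_def by auto
  then have "\<forall>(a, b)\<in>S. (b, a) \<in> L"
    using assms(4) unfolding L_def by fastforce
  ultimately show ?thesis
    using assms(1) linear_order_on_key_le[OF assms(2)]
    unfolding crown_reversible_def crown_linext_def L_def by blast
qed

text \<open>Every linear extension reversing S puts b_j below b_j' for (j, j') in the forced order,
  since b_j < a_i < b_j' for the witnessing partner a_i.\<close>

definition forced_order :: "nat \<Rightarrow> nat \<Rightarrow> (cel \<times> cel) set \<Rightarrow> nat rel" where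
  "forced_order n k S = {(j, j'). j' < n + k \<and> (\<exists>i. (CA i, CB j) \<in> S \<and> k < cdist (n + k) i j')}"

lemma mult_add_inject:
  assumes "a < (m::nat)" "b < m" "p * m + a = q * m + b"
  shows "p = q \<and> a = b"
proof -
  have "p = (p * m + a) div m" "q = (q * m + b) div m" using assms(1,2) by simp_all
  with assms(3) have "p = q" by simp
  with assms(3) show ?thesis by simp
qed

lemma mult_add_less_mult_add:
  assumes "a < (m::nat)" "p < q"
  shows "p * m + a < q * m + b"
proof -
  have "p * m + a < Suc p * m" using assms(1) by simp
  also have "\<dots> \<le> q * m" using assms(2) mult_le_mono1[of "Suc p" q m] by linarith
  finally show ?thesis by simp
qed

text \<open>Sort by level, 2 alpha i for a_i and 2 beta j + 1 for b_j, breaking ties by the index: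
  the key level * m + index does both at once.\<close>

lemma crown_reversible_if_ranks:
  fixes \<alpha> \<beta> :: "nat \<Rightarrow> nat"
  assumes "S \<subseteq> crown_Inc n k"
    "\<And>i j. crown_less n k (CA i) (CB j) \<Longrightarrow> \<alpha> i \<le> \<beta> j"
    "\<And>i j. (CA i, CB j) \<in> S \<Longrightarrow> \<beta> j < \<alpha> i"
  shows "crown_reversible n k S"
proof -
  let ?m = "n + k"
  define level where "level c = (case c of CA i \<Rightarrow> 2 * \<alpha> i | CB j \<Rightarrow> 2 * \<beta> j + 1)" for c
  define index where "index c = (case c of CA i \<Rightarrow> i | CB j \<Rightarrow> j)" for c
  define key where "key c = level c * ?m + index c" for c
  have index_less: "index c < ?m" if "c \<in> crown_ground n k" for c
    using that unfolding crown_ground_def index_def by auto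
  have key_less: "key u < key v" if "u \<in> crown_ground n k" "level u < level v" for u v
    unfolding key_def using mult_add_less_mult_add[OF index_less[OF that(1)] that(2)] .
  show ?thesis
  proof (rule crown_reversible_if_key[OF assms(1)])
    show "inj_on key (crown_ground n k)"
    proof (rule inj_onI)
      fix u v assume uv: "u \<in> crown_ground n k" "v \<in> crown_ground n k" "key u = key v"
      then have "level u = level v \<and> index u = index v"
        using mult_add_inject[OF index_less[OF uv(1)] index_less[OF uv(2)]] unfolding key_def by blast
      then show "u = v" unfolding level_def index_def by (cases u; cases v) (simp_all, presburger+)
    qed
    show "key x < key y" if xy: "crown_less n k x y" for x y
    proof -
      obtain i j where ij: "x = CA i" "y = CB j" using crown_less_cases[OF xy] by blast
      then have "level x < level y" using assms(2) xy unfolding level_def by fastforce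
      moreover have "x \<in> crown_ground n k" using xy unfolding crown_less_def crown_ground_def by auto
      ultimately show ?thesis using key_less by blast
    qed
    show "key b < key a" if ab: "(a, b) \<in> S" for a b
    proof -
      obtain i j where ij: "a = CA i" "b = CB j" "j < ?m"
        using ab assms(1) unfolding crown_Inc_def by blast
      then have "level b < level a" using assms(3) ab unfolding level_def by fastforce
      moreover have "b \<in> crown_ground n k" using ij unfolding crown_ground_def by auto
      ultimately show ?thesis using key_less by blast
    qed
  qed
qed

text \<open>Rank b_j by the number of its predecessors in the forced order and a_i by the lowest rank
  of a b above it.\<close>

lemma reversible_if_forced_order_acyclic:
  assumes "k < n" "2 \<le> n" "S \<subseteq> crown_Inc n k" "acyclic (forced_order n k S)"
  shows "crown_reversible n k S"
proof -
  let ?m = "n + k"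
  let ?R = "forced_order n k S"
  define \<sigma> where "\<sigma> j = card {c. (c, j) \<in> ?R\<^sup>+}" for j
  have "?R \<subseteq> {..<?m} \<times> {..<?m}"
    unfolding forced_order_def using Inc_pair_bounds[OF assms(1,3)] by auto
  then have \<sigma>_less: "\<sigma> j < \<sigma> j'" if "(j, j') \<in> ?R" for j j'
    unfolding \<sigma>_def using card_trancl_predecessors_less[OF _ assms(4) that] finite_subset by blast
  define above where "above i = {j'. j' < ?m \<and> k < cdist ?m i j'}" for i
  define \<tau> where "\<tau> i = Min (\<sigma> ` above i)" for i
  have above_ne: "above i \<noteq> {}" if "i < ?m" for i
  proof -
    have "k + 1 < ?m" using assms(2) by simp
    then have "cdist ?m i ((i + (k + 1)) mod ?m) = k + 1" using cdist_add_mod that by blast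
    moreover have "(i + (k + 1)) mod ?m < ?m" using that by (intro mod_less_divisor) linarith
    ultimately show ?thesis unfolding above_def by auto
  qed
  show ?thesis
  proof (rule crown_reversible_if_ranks[OF assms(3)])
    show "\<tau> i \<le> \<sigma> j" if "crown_less n k (CA i) (CB j)" for i j
      using that crown_less_CA_CB_iff[OF assms(1)] unfolding \<tau>_def above_def by simp
    show "\<sigma> j < \<tau> i" if ij: "(CA i, CB j) \<in> S" for i j
    proof -
      have "i < ?m" using Inc_pair_bounds[OF assms(1,3) ij] by simp
      then have "finite (\<sigma> ` above i)" "\<sigma> ` above i \<noteq> {}"
        using above_ne unfolding above_def by simp_all
      then have "\<tau> i \<in> \<sigma> ` above i" unfolding \<tau>_def by (rule Min_in)
      then obtain j' where "j' \<in> above i" "\<tau> i = \<sigma> j'" by blast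
      with ij have "(j, j') \<in> ?R" unfolding forced_order_def above_def by auto
      with \<open>\<tau> i = \<sigma> j'\<close> show ?thesis using \<sigma>_less by simp
    qed
  qed
qed


lemma forced_order_eq_arc_digraph:
  assumes "k < n" "S \<subseteq> crown_Inc n k"
  shows "forced_order n k S = arc_digraph (n + k) (tops S) (left_reach (n + k) S) (right_reach (n + k) k S)"
proof (intro set_eqI iffI; clarify)
  fix j j' assume "(j, j') \<in> forced_order n k S"
  then obtain i where i: "(CA i, CB j) \<in> S" "k < cdist (n + k) i j'" "j' < n + k"
    unfolding forced_order_def by auto
  then have "j \<in> tops S" "i \<in> partners S j" unfolding tops_def partners_def by auto
  with i in_reach_arc_iff[OF assms \<open>j \<in> tops S\<close> i(3)] show
    "(j, j') \<in> arc_digraph (n + k) (tops S) (left_reach (n + k) S) (right_reach (n + k) k S)"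
    unfolding arc_digraph_def by auto
next
  fix j j' assume "(j, j') \<in> arc_digraph (n + k) (tops S) (left_reach (n + k) S) (right_reach (n + k) k S)"
  then have "j \<in> tops S" "j' < n + k"
    "\<not> in_arc (n + k) (left_reach (n + k) S j) (right_reach (n + k) k S j) j j'"
    unfolding arc_digraph_def by auto
  with in_reach_arc_iff[OF assms this(1,2)] show "(j, j') \<in> forced_order n k S"
    unfolding forced_order_def partners_def by auto
qed

lemma compatible_reach_arcs:
  assumes "k < n" "crown_independent n k S"
  shows "compatible_arcs (n + k) k (tops S) (left_reach (n + k) S) (right_reach (n + k) k S)"
proof -
  have SI: "S \<subseteq> crown_Inc n k" using assms(2) unfolding crown_independent_def by blast
  show ?thesis
    unfolding compatible_arcs_def
  proof (intro conjI ballI impI)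
    show "tops S \<subseteq> {..<n + k}" by (rule tops_partners_bounded(1)[OF assms(1) SI])
    show "left_reach (n + k) S j + right_reach (n + k) k S j \<le> k" if "j \<in> tops S" for j
      by (rule reach_sum_le[OF assms(1) SI that])
    show "in_arc (n + k) (left_reach (n + k) S a) (right_reach (n + k) k S a) a b \<or>
        in_arc (n + k) (left_reach (n + k) S b) (right_reach (n + k) k S b) b a"
      if "a \<in> tops S" "b \<in> tops S" "a \<noteq> b" for a b
      by (rule reach_arcs_compatible[OF assms(1) SI assms(2) that])
  qed
qed

lemma card_add_sum_card_reach_arcs_le:
  assumes "k < n" "S \<subseteq> crown_Inc n k"
  shows "card S + (\<Sum>j\<in>tops S. card (arc (n + k) (left_reach (n + k) S j) (right_reach (n + k) k S j) j))
    \<le> card (tops S) * (k + 2)"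
proof -
  have "card S + (\<Sum>j\<in>tops S. card (arc (n + k) (left_reach (n + k) S j) (right_reach (n + k) k S j) j))
      = (\<Sum>j\<in>tops S. card (partners S j) +
          card (arc (n + k) (left_reach (n + k) S j) (right_reach (n + k) k S j) j))"
    using card_eq_sum_card_partners[OF assms] by (simp add: sum.distrib)
  also have "\<dots> \<le> (\<Sum>j\<in>tops S. k + 2)"
    by (rule sum_mono) (rule card_partners_add_card_arc[OF assms])
  finally show ?thesis by simp
qed

text \<open>With r = 2k + 1 - n and t = N - 2 the two bounds on the arc lengths combine to
  2 |S| + (r - t)(r - t + 1) \<le> 4 + r (r + 1), and a product of consecutive integers is
  nonnegative.\<close>

lemma triangle_count_arith:
  fixes n k N s C :: nat
  assumes "3 \<le> N" "N \<le> n + k" "k < n" "n \<le> 2 * k"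
    "s + C \<le> N * (k + 2)"
    "2 * (n + k - N) + 2 * ((N - 3) * (n - k - 1)) + N * (N - 1) + 2 * N \<le> 2 * C"
  shows "real s \<le> 2 + real ((2 * k + 2 - n) * (2 * k + 1 - n)) / 2"
proof -
  have "int (s + C) \<le> int (N * (k + 2))" using assms(5) by (simp only: of_nat_le_iff)
  then have a5: "int s + int C \<le> int N * (int k + 2)" by (simp add: algebra_simps)
  have a6: "2 * (int n + int k - int N) + 2 * ((int N - 3) * (int n - int k - 1)) + int N * (int N - 1) + 2 * int N
      \<le> 2 * int C"
  proof -
    have "int (2 * (n + k - N) + 2 * ((N - 3) * (n - k - 1)) + N * (N - 1) + 2 * N) \<le> int (2 * C)"
      using assms(6) by (simp only: of_nat_le_iff)
    moreover have e1: "int (n + k - N) = int n + int k - int N" using assms(2) by simp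
    moreover have e2: "int (N - 3) = int N - 3" using assms(1) by simp
    moreover have e3: "int (n - k - 1) = int n - int k - 1" using assms(3) by simp
    moreover have e4: "int (N - 1) = int N - 1" using assms(1) by simp
    ultimately show ?thesis by (simp only: of_nat_add of_nat_mult of_nat_numeral)
  qed
  define r where "r = 2 * int k + 1 - int n"
  define t where "t = int N - 2"
  have key: "(r - t) * (r - t + 1) \<ge> 0"
  proof (cases "r - t \<ge> 0")
    case True then show ?thesis by simp
  next
    case False
    then have "r - t \<le> -1" by simp
    then have "r - t + 1 \<le> 0" "r - t \<le> 0" by auto
    then show ?thesis using mult_nonpos_nonpos by blast
  qed
  have iden: "2 * int N * (int k + 2) - 2 * (int n + int k - int N) - 2 * ((int N - 3) * (int n - int k - 1))
      - int N * (int N - 1) - 2 * int N + (r - t) * (r - t + 1) = 4 + r * (r + 1)"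
    unfolding r_def t_def by (simp add: algebra_simps)
  have "2 * int s \<le> 4 + r * (r + 1)" using a5 a6 key iden by linarith
  moreover have "int ((2 * k + 2 - n) * (2 * k + 1 - n)) = (r + 1) * r"
  proof -
    have "int (2 * k + 2 - n) = r + 1" "int (2 * k + 1 - n) = r" unfolding r_def using assms(4) by auto
    then show ?thesis by (simp only: of_nat_mult)
  qed
  ultimately have "2 * int s \<le> 4 + int ((2 * k + 2 - n) * (2 * k + 1 - n))" by (simp add: algebra_simps)
  then have "real_of_int (2 * int s) \<le> real_of_int (4 + int ((2 * k + 2 - n) * (2 * k + 1 - n)))"
    by (simp only: of_int_le_iff)
  then have "2 * real s \<le> 4 + real ((2 * k + 2 - n) * (2 * k + 1 - n))" by simp
  then show ?thesis by simp
qed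


theorem theorem1p5:
  fixes n k :: nat and S :: "(cel \<times> cel) set"
  assumes "n \<ge> 3" and "k < n" and "n \<le> 2 * k"
    and "crown_independent n k S"
    and "\<not> crown_reversible n k S"
  shows "real (card S) \<le> 2 + real ((2 * k + 2 - n) * (2 * k + 1 - n)) / 2"
proof -
  let ?m = "n + k" and ?J = "tops S" and ?x = "left_reach (n + k) S" and ?y = "right_reach (n + k) k S"
  have SI: "S \<subseteq> crown_Inc n k" using assms(4) unfolding crown_independent_def by blast
  have compatible: "compatible_arcs ?m k ?J ?x ?y" by (rule compatible_reach_arcs[OF assms(2,4)])
  have "\<not> acyclic (forced_order n k S)"
    using reversible_if_forced_order_acyclic[OF assms(2) _ SI] assms(1,5) by fastforce
  then obtain N c where "chordless_cycle (arc_digraph ?m ?J ?x ?y) N c"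
    unfolding forced_order_eq_arc_digraph[OF assms(2) SI] using chordless_cycle_if_not_acyclic by blast
  from chordless_cycle_arc_digraph[OF _ compatible this] assms(2)
  have tri: "c 0 \<in> ?J" "c 1 \<in> ?J" "c 2 \<in> ?J" "arc_triangle ?m ?x ?y (c 0) (c 2) (c 1)" by simp_all
  have "?m = 2 * k + (n - k)" "1 \<le> n - k" using assms(2) by auto
  note lower = sum_card_arcs_lower_bound[OF this compatible tri(1,3,2,4)]
  have "card {c 0, c 1, c 2} = 3" using arc_triangle_distinct[OF tri(4)] by auto
  moreover have "card {c 0, c 1, c 2} \<le> card ?J"
    using tri(1-3) card_mono[OF tops_partners_bounded(2)[OF assms(2) SI]] by simp
  moreover have "card ?J \<le> ?m"
    using card_mono[of "{..<?m}" ?J] tops_partners_bounded(1)[OF assms(2) SI] by simp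
  ultimately show ?thesis
    using triangle_count_arith[OF _ _ assms(2,3) card_add_sum_card_reach_arcs_le[OF assms(2) SI] lower]
    by simp
qed

end
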